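(* Let $f(x,y)=x^2y+x^2+y^2-y\in\mathbb{Z}[x,y]$. Define $R^{(1)}(x,x_1)=f(x,x_1)$ and, for $n\ge2$, $R^{(n)}(x,x_n)=\mathrm{Res}_{x_{n-1}}\big(R^{(n-1)}(x,x_{n-1}),\,f(x_{n-1},x_n)\big)$, the resultant with respect to $x_{n-1}$; set $R_n(x)=R^{(n)}(x,x)$. Then $\deg R_n(x)=2^{n+1}-1$ for all $n\ge1$. *)

theory Defs
  imports "Subresultants.Resultant_Prelim"
begin

text \<open>Bivariate/trivariate integer polynomials are encoded as nested univariate
  polynomials. R^(n)(x, x_n) is an int poly poly: outer variable x_n,
  coefficients in Z[x].\<close>

text \<open>f(x, x_1) = x^2 x_1 + x^2 + x_1^2 - x_1 as a polynomial in x_1 over Z[x].\<close>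
definition R1 :: "int poly poly" where
  "R1 = [: [:0, 0, 1:], [:-1, 0, 1:], 1 :]"

text \<open>f(x_{n-1}, x_n) = x_{n-1}^2 x_n + x_{n-1}^2 + x_n^2 - x_n as a polynomial in
  x_{n-1} whose coefficients are polynomials in x_n over Z[x] (constant in x).\<close>
definition f_step :: "int poly poly poly" where
  "f_step = [: [:0, -1, 1:], 0, [:1, 1:] :]"

definition lift_coeffs :: "int poly poly \<Rightarrow> int poly poly poly" where
  "lift_coeffs p = map_poly (\<lambda>c. [:c:]) p"

fun Rpoly :: "nat \<Rightarrow> int poly poly" where
  "Rpoly 0 = R1"
| "Rpoly (Suc 0) = R1"
| "Rpoly (Suc (Suc n)) = resultant (lift_coeffs (Rpoly (Suc n))) f_step"

definition Rdiag :: "nat \<Rightarrow> int poly" where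
  "Rdiag n = poly (Rpoly n) [:0, 1:]"

end

theory Submission
  imports Defs "Subresultants.Subresultant"
begin

text \<open>
  Regard R^(n) as a polynomial in x and z = x_n. By induction, R^(n) has z-degree 2^n,
  x-degree at most 2^n, and a unique monomial of maximal total degree, c x^(2^n) z^(2^n - 1)
  with c nonzero. For the step write f(w, z) = (z + 1) w^2 + (z^2 - z) and split
  P(w) = R^(n)(x, w), of degree 2m = 2^n in w, as P(w) = E(w^2) + w O(w^2). Evaluating P at
  the two roots of f in w and clearing denominators gives
  Res_w(P, f) = E'^2 + (z + 1)(z^2 - z) O'^2, where E' = (z + 1)^m E(t) and
  O' = (z + 1)^(m - 1) O(t) with t = -(z^2 - z)/(z + 1). The top monomial of R^(n) survives
  in O' as its unique monomial of maximal total degree, so the second summand has the unique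
  top monomial c^2 x^(2^(n+1)) z^(2^(n+1) - 1), while E'^2 has smaller total degree. Setting
  z = x cannot cancel this monomial, hence deg R_n = 2^(n+1) - 1.
\<close>

section \<open>Resultants with an even quadratic\<close>

lemma resultant_quadratic_linear:
  fixes a b e v :: "'a :: idom"
  assumes a: "a \<noteq> 0" and v: "v \<noteq> 0"
  shows "resultant [:b, 0, a:] [:e, v:] = a * e^2 + b * v^2"
proof -
  let ?G = "[:b, 0, a:]" and ?L = "[:e, v:]" and ?r = "a * e^2 + b * v^2"
  let ?F = "smult (v^2) ?G"
  have eq: "?F + (-[:-(a*e), a*v:]) * ?L = [:?r:]"
    by (simp add: power2_eq_square)
  have dF: "degree ?F = 2" and dL: "degree ?L = 1" using a v by simp_all
  have "subresultant 0 ?F ?L = smult (v^2) [:?r:]"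
    using BT_lemma_1_13[OF eq] dF dL by simp
  then have "resultant ?F ?L = v^2 * ?r"
    unfolding subresultant_resultant by simp
  moreover have "resultant ?F ?L = v^2 * resultant ?G ?L"
    using resultant_smult_left[of "v^2" ?G ?L] v dL by simp
  ultimately show ?thesis using v by simp
qed

text \<open>For F(w) = E(w^2) + w O(w^2) of degree 2m, these are a^m E(-b/a) and a^(m-1) O(-b/a).\<close>

definition hom_even_part :: "'a :: comm_ring_1 poly \<Rightarrow> 'a \<Rightarrow> 'a \<Rightarrow> nat \<Rightarrow> 'a" where
  "hom_even_part F a b m = (\<Sum>j\<le>m. coeff F (2*j) * (-b)^j * a^(m-j))"

definition hom_odd_part :: "'a :: comm_ring_1 poly \<Rightarrow> 'a \<Rightarrow> 'a \<Rightarrow> nat \<Rightarrow> 'a" where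
  "hom_odd_part F a b m = (\<Sum>j<m. coeff F (2*j+1) * (-b)^j * a^(m-1-j))"

lemma sum_atMost_double_even_odd:
  fixes g :: "nat \<Rightarrow> 'a :: comm_monoid_add"
  shows "(\<Sum>k\<le>2*m. g k) = (\<Sum>j\<le>m. g (2*j)) + (\<Sum>j<m. g (2*j+1))"
  by (induction m) (simp_all add: sum.atMost_Suc sum.lessThan_Suc algebra_simps)

lemma quadratic_dvd_monom_reduction:
  fixes a b c :: "'a :: comm_ring_1"
  assumes "j \<le> m"
  shows "[:b, 0, a:] dvd monom (a^m * c) (2*j + r) - monom (c * (-b)^j * a^(m-j)) r"
proof -
  have "monom (a^m * c) (2*j + r) = monom (c * a^(m-j)) r * (monom a 2)^j"
    using assms by (simp add: monom_power mult_monom mult_ac flip: power_add)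
  moreover have "monom (c * (-b)^j * a^(m-j)) r = monom (c * a^(m-j)) r * [:-b:]^j"
    by (simp add: poly_const_pow smult_monom mult_ac)
  ultimately have eq: "monom (a^m * c) (2*j + r) - monom (c * (-b)^j * a^(m-j)) r
      = monom (c * a^(m-j)) r * ((monom a 2)^j - [:-b:]^j)"
    by (simp add: right_diff_distrib)
  have G: "monom a 2 - [:-b:] = [:b, 0, a:]"
    by (simp add: monom_altdef power2_eq_square)
  have "[:b, 0, a:] dvd (monom a 2)^j - [:-b:]^j"
    unfolding power_diff_sumr2 G by (rule dvd_triv_left)
  then show ?thesis
    unfolding eq by (rule dvd_mult)
qed

lemma quadratic_dvd_even_odd_reduction:
  fixes F :: "'a :: comm_ring_1 poly"
  assumes "degree F \<le> 2*m"
  shows "[:b, 0, a:] dvd smult (a^m) F - [:hom_even_part F a b m, a * hom_odd_part F a b m:]"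
proof -
  let ?p = "coeff F"
  have "smult (a^m) F = smult (a^m) (\<Sum>k\<le>2*m. monom (?p k) k)"
    by (simp add: poly_as_sum_of_monoms'[OF assms])
  also have "\<dots> = (\<Sum>k\<le>2*m. monom (a^m * ?p k) k)"
    by (simp add: smult_sum2 smult_monom)
  finally have F: "smult (a^m) F = (\<Sum>j\<le>m. monom (a^m * ?p (2*j)) (2*j))
      + (\<Sum>j<m. monom (a^m * ?p (2*j+1)) (2*j + 1))"
    by (simp only: sum_atMost_double_even_odd)
  have odd: "a * hom_odd_part F a b m = (\<Sum>j<m. ?p (2*j+1) * (-b)^j * a^(m-j))"
    unfolding hom_odd_part_def sum_distrib_left
  proof (intro sum.cong refl)
    fix j assume "j \<in> {..<m}"
    then have pow: "a * a^(m-1-j) = a^(m-j)"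
      by (simp add: Suc_diff_Suc flip: power_Suc)
    show "a * (?p (2*j+1) * (-b)^j * a^(m-1-j)) = ?p (2*j+1) * (-b)^j * a^(m-j)"
      by (simp add: ac_simps flip: pow)
  qed
  have "[:hom_even_part F a b m, a * hom_odd_part F a b m:]
      = monom (hom_even_part F a b m) 0 + monom (a * hom_odd_part F a b m) 1"
    by (simp add: monom_altdef)
  also have "\<dots> = (\<Sum>j\<le>m. monom (?p (2*j) * (-b)^j * a^(m-j)) 0)
      + (\<Sum>j<m. monom (?p (2*j+1) * (-b)^j * a^(m-j)) 1)"
    unfolding odd hom_even_part_def monom_sum ..
  finally have "[:hom_even_part F a b m, a * hom_odd_part F a b m:]
      = (\<Sum>j\<le>m. monom (?p (2*j) * (-b)^j * a^(m-j)) 0)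
      + (\<Sum>j<m. monom (?p (2*j+1) * (-b)^j * a^(m-j)) 1)" .
  with F have "smult (a^m) F - [:hom_even_part F a b m, a * hom_odd_part F a b m:]
      = (\<Sum>j\<le>m. monom (a^m * ?p (2*j)) (2*j + 0) - monom (?p (2*j) * (-b)^j * a^(m-j)) 0)
      + (\<Sum>j<m. monom (a^m * ?p (2*j+1)) (2*j + 1) - monom (?p (2*j+1) * (-b)^j * a^(m-j)) 1)"
    by (simp add: sum_subtractf)
  also have "[:b, 0, a:] dvd \<dots>"
    by (intro dvd_add dvd_sum quadratic_dvd_monom_reduction) simp_all
  finally show ?thesis .
qed

lemma resultant_even_quadratic:
  fixes F :: "'a :: idom poly"
  assumes dF: "degree F = 2*m" and m: "m \<ge> 1" and a: "a \<noteq> 0"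
  shows "resultant F [:b, 0, a:] = (hom_even_part F a b m)^2 + a * b * (hom_odd_part F a b m)^2"
proof -
  let ?G = "[:b, 0, a:]"
  define E where "E = hom_even_part F a b m"
  define Od where "Od = hom_odd_part F a b m"
  define H where "H = [:E, a * Od:]"
  have dG: "degree ?G = 2" and lcG: "lead_coeff ?G = a"
    using a by (simp_all add: numeral_2_eq_2)
  have dsF: "degree (smult (a^m) F) = 2*m" using dF a by simp
  from quadratic_dvd_even_odd_reduction[of F m b a] dF
  obtain B where "smult (a^m) F - H = ?G * B"
    by (auto simp: H_def E_def Od_def elim: dvdE)
  \<comment> \<open>a^m F is congruent to the linear H modulo G, so the Brown-Traub lemmas reduce
    Res(a^m F, G) to Res(G, H)\<close>
  then have FGH: "smult (a^m) F + (-B) * ?G = H"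
    by (simp add: algebra_simps)
  have "resultant (smult (a^m) F) ?G = a^(2*m) * resultant F ?G"
    using resultant_smult_left[of "a^m" F ?G] a dG by (simp add: power_mult mult.commute power2_eq_square)
  moreover have "resultant (smult (a^m) F) ?G = a^(2*m) * (E^2 + a * b * Od^2)"
  proof (cases "Od = 0")
    case True
    then have H: "H = [:E:]" by (simp add: H_def)
    have "subresultant 0 (smult (a^m) F) ?G = smult (a^(2*m) * E) [:E:]"
      using BT_lemma_1_13[OF FGH] dsF dG lcG H m by (simp add: power_mult_distrib)
    then show ?thesis
      using True by (simp add: subresultant_resultant power2_eq_square)
  next
    case False
    then have dH: "degree H = 1" using a by (simp add: H_def)
    have "subresultant 0 (smult (a^m) F) ?G = smult (a^(2*m-1)) (subresultant 0 ?G H)"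
      using BT_lemma_1_12[OF FGH] dsF dG lcG dH m by simp
    then have "resultant (smult (a^m) F) ?G = a^(2*m-1) * resultant ?G H"
      by (simp add: subresultant_resultant)
    also have "resultant ?G H = a * (E^2 + a * b * Od^2)"
      unfolding H_def using resultant_quadratic_linear[of a "a * Od" b E] a False
      by (simp add: algebra_simps power2_eq_square)
    also have "a^(2*m-1) * (a * (E^2 + a * b * Od^2)) = a^(2*m) * (E^2 + a * b * Od^2)"
      using m by (simp add: mult.assoc flip: power_Suc2)
    finally show ?thesis .
  qed
  ultimately show ?thesis
    using a by (simp add: E_def Od_def)
qed

section \<open>Weighted degrees of bivariate polynomials\<close>

text \<open>A polynomial Q in Z[x][z] is stored with outer variable z; bicoeff Q i j is the
  coefficient of x^i z^j.\<close>

definition bicoeff :: "'a :: zero poly poly \<Rightarrow> nat \<Rightarrow> nat \<Rightarrow> 'a" where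
  "bicoeff Q i j = coeff (coeff Q j) i"

lemma bicoeff_0 [simp]: "bicoeff 0 i j = 0"
  by (simp add: bicoeff_def)

lemma bicoeff_1: "bicoeff 1 i j = (if i = 0 \<and> j = 0 then 1 else 0)"
  by (simp add: bicoeff_def coeff_1)

lemma bicoeff_add [simp]: "bicoeff (Q + R) i j = bicoeff Q i j + bicoeff R i j"
  by (simp add: bicoeff_def)

lemma bicoeff_diff [simp]: "bicoeff (Q - R) i j = bicoeff Q i j - bicoeff R i j"
  by (simp add: bicoeff_def)

lemma bicoeff_minus [simp]: "bicoeff (- Q) i j = - bicoeff Q i j"
  by (simp add: bicoeff_def)

lemma bicoeff_pCons:
  "bicoeff (pCons p Q) i j = (if j = 0 then coeff p i else bicoeff Q i (j - 1))"
  by (simp add: bicoeff_def coeff_pCons split: nat.split)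

lemma bicoeff_monom: "bicoeff (monom p j) i j' = (if j' = j then coeff p i else 0)"
  by (simp add: bicoeff_def)

lemma bicoeff_mult_neq_0:
  fixes Q R :: "'a :: comm_semiring_0 poly poly"
  assumes "bicoeff (Q * R) i j \<noteq> 0"
  obtains i1 j1 i2 j2 where "i = i1 + i2" "j = j1 + j2" "bicoeff Q i1 j1 \<noteq> 0" "bicoeff R i2 j2 \<noteq> 0"
proof -
  from assms obtain j1 where "j1 \<le> j" "coeff (coeff Q j1 * coeff R (j - j1)) i \<noteq> 0"
    by (auto simp: bicoeff_def coeff_mult coeff_sum elim: sum.not_neutral_contains_not_neutral)
  moreover from this obtain i1 where
    "i1 \<le> i" "coeff (coeff Q j1) i1 * coeff (coeff R (j - j1)) (i - i1) \<noteq> 0"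
    by (auto simp: coeff_mult elim: sum.not_neutral_contains_not_neutral)
  ultimately show ?thesis
    using that[of i1 "i - i1" j1 "j - j1"] by (auto simp: bicoeff_def dest: mult_not_zero)
qed

definition weighted_degree_le :: "nat \<Rightarrow> nat \<Rightarrow> nat \<Rightarrow> 'a :: zero poly poly \<Rightarrow> bool" where
  "weighted_degree_le \<alpha> \<beta> M Q \<longleftrightarrow> (\<forall>i j. bicoeff Q i j \<noteq> 0 \<longrightarrow> \<alpha> * i + \<beta> * j \<le> M)"

definition weighted_degree_less :: "nat \<Rightarrow> nat \<Rightarrow> nat \<Rightarrow> 'a :: zero poly poly \<Rightarrow> bool" where
  "weighted_degree_less \<alpha> \<beta> M Q \<longleftrightarrow> (\<forall>i j. bicoeff Q i j \<noteq> 0 \<longrightarrow> \<alpha> * i + \<beta> * j < M)"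

definition weighted_lead :: "nat \<Rightarrow> nat \<Rightarrow> nat \<Rightarrow> nat \<Rightarrow> 'a :: comm_ring_1 \<Rightarrow> 'a poly poly \<Rightarrow> bool" where
  "weighted_lead \<alpha> \<beta> i j c Q \<longleftrightarrow>
     weighted_degree_less \<alpha> \<beta> (\<alpha> * i + \<beta> * j) (Q - monom (monom c i) j)"

lemma weighted_degree_le_0 [simp]: "weighted_degree_le \<alpha> \<beta> M 0"
  by (simp add: weighted_degree_le_def)

lemma weighted_degree_le_mono:
  "weighted_degree_le \<alpha> \<beta> M Q \<Longrightarrow> M \<le> M' \<Longrightarrow> weighted_degree_le \<alpha> \<beta> M' Q"
  by (force simp: weighted_degree_le_def)

lemma weighted_degree_le_imp_less:
  "weighted_degree_le \<alpha> \<beta> M Q \<Longrightarrow> M < M' \<Longrightarrow> weighted_degree_less \<alpha> \<beta> M' Q"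
  by (force simp: weighted_degree_le_def weighted_degree_less_def)

lemma weighted_degree_less_imp_le:
  "weighted_degree_less \<alpha> \<beta> M Q \<Longrightarrow> weighted_degree_le \<alpha> \<beta> M Q"
  by (force simp: weighted_degree_le_def weighted_degree_less_def)

lemma weighted_degree_le_add:
  "weighted_degree_le \<alpha> \<beta> M Q \<Longrightarrow> weighted_degree_le \<alpha> \<beta> M R \<Longrightarrow> weighted_degree_le \<alpha> \<beta> M (Q + R)"
  by (force simp: weighted_degree_le_def)

lemma weighted_degree_less_add:
  "weighted_degree_less \<alpha> \<beta> M Q \<Longrightarrow> weighted_degree_less \<alpha> \<beta> M R \<Longrightarrow>
   weighted_degree_less \<alpha> \<beta> M (Q + R)"
  by (force simp: weighted_degree_less_def)

lemma weighted_degree_le_sum: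
  "(\<And>x. x \<in> A \<Longrightarrow> weighted_degree_le \<alpha> \<beta> M (f x)) \<Longrightarrow> weighted_degree_le \<alpha> \<beta> M (sum f A)"
  by (induction A rule: infinite_finite_induct) (auto intro: weighted_degree_le_add)

lemma weighted_degree_le_mult:
  fixes Q R :: "'a :: comm_semiring_0 poly poly"
  assumes "weighted_degree_le \<alpha> \<beta> A Q" "weighted_degree_le \<alpha> \<beta> B R"
  shows "weighted_degree_le \<alpha> \<beta> (A + B) (Q * R)"
  unfolding weighted_degree_le_def
proof (intro allI impI)
  fix i j assume "bicoeff (Q * R) i j \<noteq> 0"
  then obtain i1 j1 i2 j2 where "i = i1 + i2" "j = j1 + j2"
    "\<alpha> * i1 + \<beta> * j1 \<le> A" "\<alpha> * i2 + \<beta> * j2 \<le> B"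
    using assms by (elim bicoeff_mult_neq_0) (auto simp: weighted_degree_le_def)
  then show "\<alpha> * i + \<beta> * j \<le> A + B"
    by (simp add: algebra_simps)
qed

lemma weighted_degree_le_less_mult:
  fixes Q R :: "'a :: comm_semiring_0 poly poly"
  assumes "weighted_degree_le \<alpha> \<beta> A Q" "weighted_degree_less \<alpha> \<beta> B R"
  shows "weighted_degree_less \<alpha> \<beta> (A + B) (Q * R)"
  unfolding weighted_degree_less_def
proof (intro allI impI)
  fix i j assume "bicoeff (Q * R) i j \<noteq> 0"
  then obtain i1 j1 i2 j2 where "i = i1 + i2" "j = j1 + j2"
    "\<alpha> * i1 + \<beta> * j1 \<le> A" "\<alpha> * i2 + \<beta> * j2 < B"
    using assms by (elim bicoeff_mult_neq_0) (auto simp: weighted_degree_le_def weighted_degree_less_def)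
  then show "\<alpha> * i + \<beta> * j < A + B"
    by (simp add: algebra_simps)
qed

lemma weighted_degree_le_one: "weighted_degree_le \<alpha> \<beta> 0 1"
  by (simp add: weighted_degree_le_def bicoeff_1)

lemma weighted_degree_le_power:
  fixes Q :: "'a :: comm_semiring_1 poly poly"
  assumes "weighted_degree_le \<alpha> \<beta> M Q"
  shows "weighted_degree_le \<alpha> \<beta> (k * M) (Q ^ k)"
  by (induction k) (simp_all add: weighted_degree_le_one weighted_degree_le_mult[OF assms])

lemma weighted_degree_le_monom_monom:
  "weighted_degree_le \<alpha> \<beta> (\<alpha> * i + \<beta> * j) (monom (monom c i) j)"
  by (simp add: weighted_degree_le_def bicoeff_monom coeff_monom)

lemma weighted_lead_imp_le:
  assumes "weighted_lead \<alpha> \<beta> i j c Q"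
  shows "weighted_degree_le \<alpha> \<beta> (\<alpha> * i + \<beta> * j) Q"
proof -
  have "Q = monom (monom c i) j + (Q - monom (monom c i) j)"
    by simp
  also have "weighted_degree_le \<alpha> \<beta> (\<alpha> * i + \<beta> * j) \<dots>"
    using assms unfolding weighted_lead_def
    by (intro weighted_degree_le_add weighted_degree_le_monom_monom weighted_degree_less_imp_le)
  finally show ?thesis .
qed

lemma bicoeff_weighted_lead:
  assumes "weighted_lead \<alpha> \<beta> i j c Q"
  shows "bicoeff Q i j = c"
  using assms by (force simp: weighted_lead_def weighted_degree_less_def bicoeff_monom coeff_monom)

lemma weighted_lead_less:
  assumes "weighted_lead \<alpha> \<beta> i j c Q" "bicoeff Q i' j' \<noteq> 0" "(i', j') \<noteq> (i, j)"
  shows "\<alpha> * i' + \<beta> * j' < \<alpha> * i + \<beta> * j"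
proof -
  have "bicoeff (Q - monom (monom c i) j) i' j' = bicoeff Q i' j'"
    using assms(3) by (auto simp: bicoeff_monom coeff_monom)
  then show ?thesis
    using assms(1,2) by (auto simp: weighted_lead_def weighted_degree_less_def)
qed

lemma weighted_lead_add:
  assumes "weighted_lead \<alpha> \<beta> i j c Q" "weighted_degree_less \<alpha> \<beta> (\<alpha> * i + \<beta> * j) R"
  shows "weighted_lead \<alpha> \<beta> i j c (Q + R)"
  using weighted_degree_less_add[OF assms[unfolded weighted_lead_def]]
  by (simp add: weighted_lead_def algebra_simps)

lemma weighted_lead_mult:
  fixes Q R :: "'a :: comm_ring_1 poly poly"
  assumes Q: "weighted_lead \<alpha> \<beta> i1 j1 c1 Q" and R: "weighted_lead \<alpha> \<beta> i2 j2 c2 R"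
  shows "weighted_lead \<alpha> \<beta> (i1 + i2) (j1 + j2) (c1 * c2) (Q * R)"
proof -
  define m1 where "m1 = monom (monom c1 i1) j1"
  define m2 where "m2 = monom (monom c2 i2) j2"
  let ?w1 = "\<alpha> * i1 + \<beta> * j1" and ?w2 = "\<alpha> * i2 + \<beta> * j2"
  have m12: "m1 * m2 = monom (monom (c1 * c2) (i1 + i2)) (j1 + j2)"
    by (simp add: m1_def m2_def mult_monom)
  have eq: "Q * R - monom (monom (c1 * c2) (i1 + i2)) (j1 + j2) = R * (Q - m1) + m1 * (R - m2)"
    by (simp add: algebra_simps flip: m12)
  have weight: "\<alpha> * (i1 + i2) + \<beta> * (j1 + j2) = ?w1 + ?w2"
    by (simp add: algebra_simps)
  have "weighted_degree_less \<alpha> \<beta> (?w2 + ?w1) (R * (Q - m1))"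
    using Q R unfolding weighted_lead_def m1_def
    by (intro weighted_degree_le_less_mult weighted_lead_imp_le[OF R])
  then have "weighted_degree_less \<alpha> \<beta> (?w1 + ?w2) (R * (Q - m1))"
    by (simp only: add.commute)
  moreover have "weighted_degree_less \<alpha> \<beta> (?w1 + ?w2) (m1 * (R - m2))"
    using R unfolding weighted_lead_def m1_def m2_def
    by (intro weighted_degree_le_less_mult weighted_degree_le_monom_monom)
  ultimately show ?thesis
    unfolding weighted_lead_def eq weight by (rule weighted_degree_less_add)
qed

lemma weighted_lead_power:
  fixes Q :: "'a :: comm_ring_1 poly poly"
  assumes "weighted_lead \<alpha> \<beta> i j c Q"
  shows "weighted_lead \<alpha> \<beta> (k * i) (k * j) (c ^ k) (Q ^ k)"
proof (induction k)
  case 0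
  show ?case by (simp add: weighted_lead_def weighted_degree_less_def)
next
  case (Suc k)
  show ?case
    using weighted_lead_mult[OF assms Suc] by simp
qed

lemma coeff_diagonal_eq_0:
  fixes Q :: "'a :: comm_semiring_1 poly poly"
  assumes "weighted_degree_less 1 1 M Q" "M \<le> k"
  shows "coeff (poly Q [:0, 1:]) k = 0"
proof -
  have "coeff (poly Q [:0, 1:]) k = (\<Sum>l\<le>degree Q. coeff (monom 1 l * coeff Q l) k)"
    unfolding poly_as_sum by (simp add: monom_altdef coeff_sum)
  also have "\<dots> = 0"
  proof (intro sum.neutral ballI)
    fix l
    have "bicoeff Q (k - l) l = 0" if "l \<le> k"
      using assms that by (force simp: weighted_degree_less_def)
    then show "coeff (monom 1 l * coeff Q l) k = 0"
      by (simp add: Polynomial.coeff_monom_mult bicoeff_def)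
  qed
  finally show ?thesis .
qed

lemma degree_diagonal_weighted_lead:
  fixes Q :: "'a :: comm_ring_1 poly poly"
  assumes lead: "weighted_lead 1 1 i j c Q" and "c \<noteq> 0"
  shows "degree (poly Q [:0, 1:]) = i + j"
proof -
  have less: "weighted_degree_less 1 1 (i + j) (Q - monom (monom c i) j)"
    using lead by (simp add: weighted_lead_def)
  have "poly (monom (monom c i) j) [:0, 1:] = monom c (i + j)"
    by (simp add: poly_monom monom_altdef power_add)
  then have "poly Q [:0, 1:] = monom c (i + j) + poly (Q - monom (monom c i) j) [:0, 1:]"
    by simp
  then have coeff_top: "coeff (poly Q [:0, 1:]) k = coeff (monom c (i + j)) k" if "i + j \<le> k" for k
    using coeff_diagonal_eq_0[OF less that] by simp
  show ?thesis
  proof (rule antisym)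
    show "degree (poly Q [:0, 1:]) \<le> i + j"
      using coeff_top by (intro degree_le) simp
    show "i + j \<le> degree (poly Q [:0, 1:])"
      using coeff_top[of "i + j"] \<open>c \<noteq> 0\<close> by (intro le_degree) simp
  qed
qed

section \<open>The iterated resultants\<close>

text \<open>As a polynomial in w = x_(n-1), f_step is (z + 1) w^2 + (z^2 - z), with z + 1 = [:1, 1:]
  and z^2 - z = [:0, -1, 1:].\<close>

abbreviation f_step_even :: "int poly poly \<Rightarrow> nat \<Rightarrow> int poly poly" where
  "f_step_even P m \<equiv> hom_even_part (lift_coeffs P) [:1, 1:] [:0, -1, 1:] m"

abbreviation f_step_odd :: "int poly poly \<Rightarrow> nat \<Rightarrow> int poly poly" where
  "f_step_odd P m \<equiv> hom_odd_part (lift_coeffs P) [:1, 1:] [:0, -1, 1:] m"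

lemma Rpoly_Suc:
  assumes "n \<ge> 1"
  shows "Rpoly (Suc n) = resultant (lift_coeffs (Rpoly n)) f_step"
proof -
  obtain k where "n = Suc k"
    using assms by (metis Suc_le_D One_nat_def)
  then show ?thesis
    by (simp only: Rpoly.simps(3))
qed

lemma degree_lift_coeffs: "degree (lift_coeffs P) = degree P"
  by (simp add: lift_coeffs_def)

lemma coeff_lift_coeffs: "coeff (lift_coeffs P) k = [:coeff P k:]"
  by (simp add: lift_coeffs_def)

lemma bicoeff_coeff_lift_coeffs:
  "bicoeff (coeff (lift_coeffs P) k) i j = (if j = 0 then bicoeff P i k else 0)"
  by (simp add: coeff_lift_coeffs bicoeff_pCons) (simp add: bicoeff_def)

lemma resultant_f_step:
  assumes "degree P = 2*m" "m \<ge> 1"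
  shows "resultant (lift_coeffs P) f_step
    = (f_step_even P m)^2 + [:1, 1:] * [:0, -1, 1:] * (f_step_odd P m)^2"
  unfolding f_step_def using assms
  by (intro resultant_even_quadratic) (simp_all add: degree_lift_coeffs)

lemma weighted_degree_le_f_step_factors:
  "weighted_degree_le 1 0 0 ([:1, 1:] :: int poly poly)"
  "weighted_degree_le 1 0 0 (- [:0, -1, 1:] :: int poly poly)"
  "weighted_degree_le 1 0 0 ([:0, -1, 1:] :: int poly poly)"
  "weighted_degree_le 1 1 1 ([:1, 1:] :: int poly poly)"
  by (auto simp: weighted_degree_le_def bicoeff_pCons bicoeff_1 split: if_splits)

lemma weighted_lead_f_step_factors:
  "weighted_lead 1 1 0 2 (-1) (- [:0, -1, 1:] :: int poly poly)"
  "weighted_lead 1 1 0 3 1 ([:1, 1:] * [:0, -1, 1:] :: int poly poly)"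
  by (auto simp: weighted_lead_def weighted_degree_less_def bicoeff_pCons bicoeff_monom bicoeff_1
      split: if_splits)

lemma weighted_degree_le_coeff_lift_coeffs:
  "weighted_degree_le \<alpha> \<beta> M (coeff (lift_coeffs P) k) \<longleftrightarrow> (\<forall>i. bicoeff P i k \<noteq> 0 \<longrightarrow> \<alpha> * i \<le> M)"
  by (auto simp: weighted_degree_le_def bicoeff_coeff_lift_coeffs)

lemma weighted_lead_coeff_lift_coeffs:
  assumes lead: "weighted_lead 1 1 i j c P"
  shows "weighted_lead 1 1 i 0 c (coeff (lift_coeffs P) j)"
  unfolding weighted_lead_def weighted_degree_less_def
proof (intro allI impI)
  fix i' j' assume nz: "bicoeff (coeff (lift_coeffs P) j - monom (monom c i) 0) i' j' \<noteq> 0"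
  then have "j' = 0"
    by (auto simp: bicoeff_coeff_lift_coeffs bicoeff_monom split: if_splits)
  moreover have "i' \<noteq> i"
    using nz \<open>j' = 0\<close> bicoeff_weighted_lead[OF lead]
    by (auto simp: bicoeff_coeff_lift_coeffs bicoeff_monom)
  moreover have "bicoeff P i' j \<noteq> 0"
    using nz \<open>j' = 0\<close> \<open>i' \<noteq> i\<close>
    by (simp add: bicoeff_coeff_lift_coeffs bicoeff_monom coeff_monom)
  ultimately show "1 * i' + 1 * j' < 1 * i + 1 * 0"
    using weighted_lead_less[OF lead, of i' j] by simp
qed

lemma x_degree_le_f_step_term:
  fixes C :: "int poly poly"
  assumes "weighted_degree_le 1 0 A C"
  shows "weighted_degree_le 1 0 A (C * (- [:0, -1, 1:])^j * [:1, 1:]^k)"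
  using weighted_degree_le_mult[OF weighted_degree_le_mult[OF assms
      weighted_degree_le_power[OF weighted_degree_le_f_step_factors(2)]]
      weighted_degree_le_power[OF weighted_degree_le_f_step_factors(1)]]
  by simp

lemma total_degree_le_f_step_term:
  fixes C :: "int poly poly"
  assumes "weighted_degree_le 1 1 A C"
  shows "weighted_degree_le 1 1 (A + 2*j + k) (C * (- [:0, -1, 1:])^j * [:1, 1:]^k)"
  using weighted_degree_le_mult[OF weighted_degree_le_mult[OF assms
      weighted_degree_le_power[OF weighted_lead_imp_le[OF weighted_lead_f_step_factors(1)]]]
      weighted_degree_le_power[OF weighted_degree_le_f_step_factors(4)]]
  by (simp add: mult_2)

lemma x_degree_le_f_step_parts:
  assumes "weighted_degree_le 1 0 M P"
  shows "weighted_degree_le 1 0 M (f_step_even P m)" "weighted_degree_le 1 0 M (f_step_odd P m)"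
proof -
  have coeffs: "weighted_degree_le 1 0 M (coeff (lift_coeffs P) k)" for k
    unfolding weighted_degree_le_coeff_lift_coeffs using assms by (auto simp: weighted_degree_le_def)
  show "weighted_degree_le 1 0 M (f_step_even P m)" "weighted_degree_le 1 0 M (f_step_odd P m)"
    unfolding hom_even_part_def hom_odd_part_def
    by (intro weighted_degree_le_sum x_degree_le_f_step_term coeffs)+
qed

lemma x_degree_le_resultant_f_step:
  assumes "degree P = 2*m" "m \<ge> 1" "weighted_degree_le 1 0 (2*m) P"
  shows "weighted_degree_le 1 0 (4*m) (resultant (lift_coeffs P) f_step)"
proof -
  note parts = x_degree_le_f_step_parts[OF assms(3)]
  have "weighted_degree_le 1 0 (2 * (2*m)) ((f_step_even P m)^2)"
    by (rule weighted_degree_le_power[OF parts(1)])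
  moreover have "weighted_degree_le 1 0 (0 + 0 + 2 * (2*m)) ([:1, 1:] * [:0, -1, 1:] * (f_step_odd P m)^2)"
    by (intro weighted_degree_le_mult weighted_degree_le_power parts weighted_degree_le_f_step_factors)
  ultimately show ?thesis
    unfolding resultant_f_step[OF assms(1,2)] by (intro weighted_degree_le_add) simp_all
qed

lemma total_degree_le_f_step_even:
  assumes m: "m \<ge> 1" and x: "weighted_degree_le 1 0 (2*m) P"
    and lead: "weighted_lead 1 1 (2*m) (2*m-1) c P"
  shows "weighted_degree_le 1 1 (4*m-1) (f_step_even P m)"
  unfolding hom_even_part_def
proof (intro weighted_degree_le_sum)
  fix j assume "j \<in> {..m}"
  show "weighted_degree_le 1 1 (4*m-1) (coeff (lift_coeffs P) (2*j) * (- [:0, -1, 1:])^j * [:1, 1:]^(m-j))"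
  proof (cases "j = m")
    case True
    have "weighted_degree_le 1 1 (2*m-1) (coeff (lift_coeffs P) (2*m))"
      unfolding weighted_degree_le_coeff_lift_coeffs
      using weighted_lead_less[OF lead] m by force
    from total_degree_le_f_step_term[OF this, of m 0] show ?thesis
      using True m by (auto elim: weighted_degree_le_mono)
  next
    case False
    have "weighted_degree_le 1 1 (2*m) (coeff (lift_coeffs P) (2*j))"
      unfolding weighted_degree_le_coeff_lift_coeffs using x by (auto simp: weighted_degree_le_def)
    from total_degree_le_f_step_term[OF this, of j "m-j"] show ?thesis
      using False \<open>j \<in> {..m}\<close> by (auto elim: weighted_degree_le_mono)
  qed
qed

lemma total_lead_f_step_odd:
  assumes m: "m \<ge> 1" and x: "weighted_degree_le 1 0 (2*m) P"
    and lead: "weighted_lead 1 1 (2*m) (2*m-1) c P"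
  shows "weighted_lead 1 1 (2*m) (2*m-2) (c * (-1)^(m-1)) (f_step_odd P m)"
proof -
  obtain k where k: "m = Suc k" using m by (cases m) auto
  let ?term = "\<lambda>j. coeff (lift_coeffs P) (2*j+1) * (- [:0, -1, 1:])^j * [:1, 1:]^(m-1-j)"
  have split: "f_step_odd P m = coeff (lift_coeffs P) (2*m-1) * (- [:0, -1, 1:])^k + (\<Sum>j<k. ?term j)"
    by (simp add: hom_odd_part_def k)
  have pow: "weighted_lead 1 1 0 (2*k) ((-1)^k) ((- [:0, -1, 1:] :: int poly poly)^k)"
    using weighted_lead_power[OF weighted_lead_f_step_factors(1), of k] by (simp add: mult.commute)
  have "weighted_lead 1 1 (2*m + 0) (0 + 2*k) (c * (-1)^k)
      (coeff (lift_coeffs P) (2*m-1) * (- [:0, -1, 1:])^k)"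
    by (rule weighted_lead_mult[OF weighted_lead_coeff_lift_coeffs[OF lead] pow])
  then have top: "weighted_lead 1 1 (2*m) (2*m-2) (c * (-1)^(m-1))
      (coeff (lift_coeffs P) (2*m-1) * (- [:0, -1, 1:])^k)"
    by (simp add: k)
  have "weighted_degree_le 1 1 (4*m-3) (\<Sum>j<k. ?term j)"
  proof (intro weighted_degree_le_sum)
    fix j assume "j \<in> {..<k}"
    have "weighted_degree_le 1 1 (2*m) (coeff (lift_coeffs P) (2*j+1))"
      unfolding weighted_degree_le_coeff_lift_coeffs using x by (auto simp: weighted_degree_le_def)
    from total_degree_le_f_step_term[OF this, of j "m-1-j"] show "weighted_degree_le 1 1 (4*m-3) (?term j)"
      using \<open>j \<in> {..<k}\<close> k by (auto elim: weighted_degree_le_mono)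
  qed
  then have "weighted_degree_less 1 1 (1 * (2*m) + 1 * (2*m-2)) (\<Sum>j<k. ?term j)"
    by (rule weighted_degree_le_imp_less) (simp add: k)
  with top show ?thesis
    unfolding split by (rule weighted_lead_add)
qed

lemma total_lead_resultant_f_step:
  assumes "degree P = 2*m" and m: "m \<ge> 1" and x: "weighted_degree_le 1 0 (2*m) P"
    and lead: "weighted_lead 1 1 (2*m) (2*m-1) c P"
  shows "weighted_lead 1 1 (4*m) (4*m-1) (c^2) (resultant (lift_coeffs P) f_step)"
proof -
  obtain k where k: "m = Suc k" using m by (cases m) auto
  have "weighted_lead 1 1 (0 + 2*(2*m)) (3 + 2*(2*m-2)) (1 * (c * (-1)^(m-1))^2)
      ([:1, 1:] * [:0, -1, 1:] * (f_step_odd P m)^2)"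
    by (intro weighted_lead_mult weighted_lead_f_step_factors(2)
        weighted_lead_power total_lead_f_step_odd[OF m x lead])
  moreover have "0 + 2*(2*m) = 4*m" "3 + 2*(2*m-2) = 4*m-1" "1 * (c * (-1)^(m-1))^2 = c^2"
    by (simp_all add: k power_mult_distrib flip: power_mult)
  ultimately have odd: "weighted_lead 1 1 (4*m) (4*m-1) (c^2) ([:1, 1:] * [:0, -1, 1:] * (f_step_odd P m)^2)"
    by (simp only:)
  have "weighted_degree_le 1 1 (2 * (4*m-1)) ((f_step_even P m)^2)"
    by (intro weighted_degree_le_power total_degree_le_f_step_even[OF m x lead])
  then have even: "weighted_degree_less 1 1 (1 * (4*m) + 1 * (4*m-1)) ((f_step_even P m)^2)"
    by (rule weighted_degree_le_imp_less) (simp add: k)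
  show ?thesis
    unfolding resultant_f_step[OF assms(1,2)] add.commute[of "(f_step_even P m)^2"]
    using odd even by (rule weighted_lead_add)
qed

lemma degree_f_step_term_le:
  "degree ([:p:] * (- [:0, -1, 1:])^j * [:1, 1:]^k :: int poly poly) \<le> 2*j + k"
proof -
  have "degree ([:p:] * (- [:0, -1, 1:])^j * [:1, 1:]^k :: int poly poly)
      \<le> degree [:p:] + degree ((- [:0, -1, 1:] :: int poly poly)^j) + degree (([:1, 1:] :: int poly poly)^k)"
    by (meson add_le_mono degree_mult_le le_refl order_trans)
  also have "\<dots> = 2*j + k"
    by (simp add: degree_power_eq)
  finally show ?thesis .
qed

lemma degree_f_step_even:
  assumes "degree P = 2*m" "m \<ge> 1"
  shows "degree (f_step_even P m) = 2*m"
proof -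
  let ?term = "\<lambda>j. [:coeff P (2*j):] * (- [:0, -1, 1:])^j * [:1, 1:]^(m-j)"
  have split: "f_step_even P m = ?term m + (\<Sum>j<m. ?term j)"
    unfolding hom_even_part_def coeff_lift_coeffs lessThan_Suc_atMost[symmetric] sum.lessThan_Suc
    by (simp only: add.commute)
  have "P \<noteq> 0"
    using assms by auto
  then have "coeff P (2*m) \<noteq> 0"
    using assms(1) by (metis leading_coeff_neq_0)
  then have top: "degree (?term m) = 2*m"
    by (simp add: degree_mult_eq degree_power_eq)
  have "degree (\<Sum>j<m. ?term j) \<le> 2*m - 1"
  proof (rule degree_sum_le)
    fix j assume "j \<in> {..<m}"
    then show "degree (?term j) \<le> 2*m - 1"
      using degree_f_step_term_le[of "coeff P (2*j)" j "m-j"] by simp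
  qed simp
  then show ?thesis
    unfolding split using top assms(2) by (subst degree_add_eq_left) simp_all
qed

lemma degree_f_step_odd_le: "degree (f_step_odd P m) \<le> 2*m - 2"
  unfolding hom_odd_part_def coeff_lift_coeffs
proof (rule degree_sum_le)
  fix j assume "j \<in> {..<m}"
  then show "degree ([:coeff P (2*j+1):] * (- [:0, -1, 1:])^j * [:1, 1:]^(m-1-j)) \<le> 2*m - 2"
    using degree_f_step_term_le[of "coeff P (2*j+1)" j "m-1-j"] by simp
qed simp

lemma degree_resultant_f_step:
  assumes "degree P = 2*m" "m \<ge> 1"
  shows "degree (resultant (lift_coeffs P) f_step) = 4*m"
proof -
  have even: "degree ((f_step_even P m)^2) = 4*m"
    using degree_f_step_even[OF assms] assms(2) by (subst degree_power_eq) auto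
  have "degree ([:1, 1:] * [:0, -1, 1:] * (f_step_odd P m)^2) \<le> 3 + 2 * (2*m - 2)"
    using degree_power_le[of "f_step_odd P m" 2] degree_f_step_odd_le[of P m]
    by (intro order_trans[OF degree_mult_le] add_mono) (auto simp: numeral_3_eq_3)
  then show ?thesis
    unfolding resultant_f_step[OF assms] using even assms(2) by (subst degree_add_eq_left) simp_all
qed

lemma R1_shape: "degree R1 = 2" "weighted_degree_le 1 0 2 R1" "weighted_lead 1 1 2 1 1 R1"
  by (auto simp: R1_def weighted_degree_le_def weighted_lead_def weighted_degree_less_def
      bicoeff_pCons bicoeff_monom bicoeff_1 coeff_pCons coeff_monom split: nat.split if_splits)

lemma Rpoly_shape:
  assumes "n \<ge> 1"
  shows "degree (Rpoly n) = 2^n \<and> weighted_degree_le 1 0 (2^n) (Rpoly n) \<and>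
    (\<exists>c. c \<noteq> 0 \<and> weighted_lead 1 1 (2^n) (2^n - 1) c (Rpoly n))"
  using assms
proof (induction n rule: dec_induct)
  case base
  show ?case
    using R1_shape by (auto intro!: exI[of _ 1])
next
  case (step n)
  define m :: nat where "m = 2^(n-1)"
  have m: "m \<ge> 1" and dn: "2^n = 2*m"
    using step.hyps(1) by (cases n; simp add: m_def)+
  from step.IH obtain c where "c \<noteq> 0" and P: "degree (Rpoly n) = 2*m"
    "weighted_degree_le 1 0 (2*m) (Rpoly n)" "weighted_lead 1 1 (2*m) (2*m-1) c (Rpoly n)"
    unfolding dn by blast
  have "2^Suc n = 4*m"
    using dn by simp
  then show ?case
    unfolding Rpoly_Suc[OF step.hyps(1)]
    using degree_resultant_f_step[OF P(1) m] x_degree_le_resultant_f_step[OF P(1) m P(2)]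
      total_lead_resultant_f_step[OF P(1) m P(2,3)] \<open>c \<noteq> 0\<close>
    by (auto intro!: exI[of _ "c^2"])
qed

theorem mainTheorem19:
  fixes n :: nat
  assumes "n \<ge> 1"
  shows "degree (Rdiag n) = 2 ^ (n + 1) - 1"
proof -
  from Rpoly_shape[OF assms] obtain c
    where "weighted_lead 1 1 (2^n) (2^n - 1) c (Rpoly n)" "c \<noteq> 0"
    by blast
  then have "degree (Rdiag n) = 2^n + (2^n - 1)"
    unfolding Rdiag_def by (rule degree_diagonal_weighted_lead)
  then show ?thesis
    by simp
qed

end
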